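(* Let $X=\mathbb{R}/\mathbb{Z}$ be the circle with its standard metric, and let $\mu_1=\mu_2$ be Lebesgue measure. Let $(X,T_1,\mu_1)$ be exponentially mixing for $BV$ against $L^\infty$ and let $T_2(x)=x+\alpha \bmod 1$ be the rotation by an angle $\alpha$. Let $(r_n)_n$ be a sequence of positive numbers. (1) If $n^2r_n\to0$, then $(\mu_1\times\mu_2)(\liminf_n E_{n,r_n}^{T_1,T_2})=0$. (2) If $(r_n)_n$ and $(nr_n)_n$ are decreasing and $\sum_{n=1}^\infty nr_n<\infty$, then $(\mu_1\times\mu_2)(\limsup_n E_{n,r_n}^{T_1,T_2})=0$.
   Context: $(X,T,\mu)$ is exponentially mixing for $BV$ against $L^\infty$ if there are $C,\theta>0$ such that for all $\psi$ of bounded variation, all $\varphi\in L^\infty(\mu)$ and all $n\ge0$, $\bigl|\int\psi\cdot\varphi\circ T^n\,d\mu-\int\psi\,d\mu\int\varphi\,d\mu\bigr|\le C\|\psi\|_{BV}\|\varphi\|_{L^\infty}e^{-\theta n}$. For $n\in\mathbb{N}$ and $r>0$, $E_{n,r}^{T_1,T_2}:=\{(x,y)\in X\times X : d(T_1^i x, T_2^j y)<r \text{ for some } 0\le i,j<n\}$; $E_{n,r_n}^{T_1,T_2}$ denotes this set with $r=r_n$. *)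

theory Defs
  imports "HOL-Analysis.Analysis"
begin

text \<open>The circle R/Z is represented by the fundamental domain [0,1).\<close>

definition circle :: "real set" where
  "circle = {0..<1}"

definition circle_measure :: "real measure" where
  "circle_measure = restrict_space lborel circle"

definition circle_dist :: "real \<Rightarrow> real \<Rightarrow> real" where
  "circle_dist x y = min (frac (x - y)) (1 - frac (x - y))"

definition rotation :: "real \<Rightarrow> real \<Rightarrow> real" where
  "rotation \<alpha> x = frac (x + \<alpha>)"

definition circle_var_sums :: "(real \<Rightarrow> real) \<Rightarrow> real set" where
  "circle_var_sums \<psi> =
     {(\<Sum>i<k. \<bar>\<psi> (p (Suc i)) - \<psi> (p i)\<bar>) + \<bar>\<psi> (p 0) - \<psi> (p k)\<bar> | p k.
        (\<forall>i\<le>k. p i \<in> circle) \<and> (\<forall>i<k. p i < p (Suc i))}"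

definition circle_var :: "(real \<Rightarrow> real) \<Rightarrow> real" where
  "circle_var \<psi> = Sup (circle_var_sums \<psi>)"

definition bounded_variation :: "(real \<Rightarrow> real) \<Rightarrow> bool" where
  "bounded_variation \<psi> \<longleftrightarrow> bdd_above (circle_var_sums \<psi>)"

definition bv_norm :: "(real \<Rightarrow> real) \<Rightarrow> real" where
  "bv_norm \<psi> = circle_var \<psi> + (SUP x\<in>circle. \<bar>\<psi> x\<bar>)"

text \<open>An L-infinity function is a
  measurable function phi with |phi| \<le> K almost everywhere; its L-infinity norm
  is the infimum of such K, so bounding by every such K is the same as bounding
  by the norm.\<close>
definition exp_mixing_BV_Linf :: "real measure \<Rightarrow> (real \<Rightarrow> real) \<Rightarrow> bool" where
  "exp_mixing_BV_Linf M T \<longleftrightarrow>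
     (\<exists>C \<theta>. C > 0 \<and> \<theta> > 0 \<and>
        (\<forall>\<psi> \<phi> K n. bounded_variation \<psi> \<longrightarrow> \<phi> \<in> borel_measurable M \<longrightarrow>
            (AE x in M. \<bar>\<phi> x\<bar> \<le> K) \<longrightarrow>
            \<bar>(\<integral>x. \<psi> x * \<phi> ((T ^^ n) x) \<partial>M) - (\<integral>x. \<psi> x \<partial>M) * (\<integral>x. \<phi> x \<partial>M)\<bar>
              \<le> C * bv_norm \<psi> * K * exp (- \<theta> * real n)))"

definition E_set :: "(real \<Rightarrow> real) \<Rightarrow> (real \<Rightarrow> real) \<Rightarrow> nat \<Rightarrow> real \<Rightarrow> (real \<times> real) set" where
  "E_set T1 T2 n r = {(x, y). x \<in> circle \<and> y \<in> circle \<and>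
      (\<exists>i<n. \<exists>j<n. circle_dist ((T1 ^^ i) x) ((T2 ^^ j) y) < r)}"

end

(*
  For fixed x, every y in [0,1) with d(T1^i x, R^j y) < r lies within r of one of five integer
  translates of T1^i x - j alpha, so by Fubini the pairs (x, y) with d(T1^i x, R^j y) < r have
  product measure at most 10 r, and E_{n,r} has measure at most 10 n^2 r. Part (1) follows since
  the liminf set is a countable union of intersections of the E_{m,r_m} over m >= k, each of
  measure at most inf 10 m^2 r_m = 0. For part (2), monotonicity of r puts E_{n,r_n} inside
  E_{2^(k+1), r_(2^k)} when 2^k <= n < 2^(k+1); these have measure O(4^k r_(2^k)), summable by
  Cauchy condensation of the series of n r_n, and Borel-Cantelli applies.
*)
theory Submission
  imports Defs
begin

lemma space_circle_measure [simp]: "space circle_measure = circle"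
  by (simp add: circle_measure_def space_restrict_space)

lemma circle_in_borel [measurable]: "circle \<in> sets borel"
  by (simp add: circle_def)

lemma emeasure_circle_measure:
  "A \<subseteq> circle \<Longrightarrow> emeasure circle_measure A = emeasure lborel A"
  unfolding circle_measure_def by (rule emeasure_restrict_space) auto

lemma sets_circle_measure_Int_borel:
  "A \<in> sets borel \<Longrightarrow> circle \<inter> A \<in> sets circle_measure"
  by (auto simp: circle_measure_def sets_restrict_space)

lemma finite_measure_circle_measure: "finite_measure circle_measure"
  by (rule finite_measureI) (simp add: emeasure_circle_measure circle_def)

lemma borel_measurable_circle_measure_id:
  "(\<lambda>x. x) \<in> borel_measurable circle_measure"
  unfolding circle_measure_def by (rule measurable_restrict_space1) simp

lemma borel_measurable_circle_dist [measurable (raw)]: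
  "f \<in> borel_measurable M \<Longrightarrow> g \<in> borel_measurable M \<Longrightarrow>
    (\<lambda>x. circle_dist (f x) (g x)) \<in> borel_measurable M"
  unfolding circle_dist_def frac_def
  by (intro borel_measurable_min borel_measurable_diff borel_measurable_const
      measurable_compose[OF _ borel_measurable_real_floor])

lemma rotation_in_circle: "rotation \<alpha> x \<in> circle"
  by (simp add: rotation_def circle_def frac_lt_1)

lemma measurable_rotation: "rotation \<alpha> \<in> circle_measure \<rightarrow>\<^sub>M circle_measure"
proof -
  have "rotation \<alpha> \<in> borel_measurable borel"
    unfolding rotation_def frac_def
    by measurable
  then show ?thesis
    unfolding circle_measure_def
    by (intro measurable_restrict_space2 measurable_restrict_space1)
      (auto simp: rotation_in_circle)
qed

lemma circle_dist_lt_imp_near_integer: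
  assumes "a \<in> circle" "b \<in> circle" "circle_dist a b < r"
  obtains k :: int where "k \<in> {-1..1}" "\<bar>a - b - of_int k\<bar> < r"
proof -
  let ?k = "\<lfloor>a - b\<rfloor>"
  have "?k \<in> {-1..0}"
    using assms(1,2) by (auto simp: circle_def floor_le_iff le_floor_iff)
  moreover have "\<bar>a - b - of_int ?k\<bar> < r \<or> \<bar>a - b - of_int (?k + 1)\<bar> < r"
    using assms(3) of_int_floor_le[of "a - b"] real_of_int_floor_add_one_gt[of "a - b"]
    by (auto simp: circle_dist_def frac_def min_def split: if_splits)
  ultimately show thesis
    using that[of ?k] that[of "?k + 1"] by force
qed

lemma frac_add_circle:
  assumes "y \<in> circle"
  obtains l :: int where "l \<in> {0..1}" "frac (y + c) = y + frac c - of_int l"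
proof -
  have "\<lfloor>y + c\<rfloor> - \<lfloor>c\<rfloor> \<in> {0..1}"
    using assms by (auto simp: circle_def floor_le_iff le_floor_iff) linarith+
  then show thesis
    by (intro that[of "\<lfloor>y + c\<rfloor> - \<lfloor>c\<rfloor>"]) (auto simp: frac_def)
qed

lemma rotation_iterate:
  assumes "y \<in> circle"
  shows "(rotation \<alpha> ^^ j) y = frac (y + real j * \<alpha>)"
proof (induction j)
  case 0
  then show ?case using assms by (simp add: circle_def frac_eq)
next
  case (Suc j)
  have "(rotation \<alpha> ^^ Suc j) y = frac (frac (y + real j * \<alpha>) + \<alpha>)"
    by (simp add: Suc.IH rotation_def)
  also have "\<dots> = frac (y + real (Suc j) * \<alpha>)"
    by (simp add: frac_def algebra_simps flip: of_int_diff)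
  finally show ?case .
qed

lemma rotation_iterate_near_imp:
  assumes "a \<in> circle" "y \<in> circle" "circle_dist a ((rotation \<alpha> ^^ j) y) < r"
  obtains m :: int where "m \<in> {-2..2}" "\<bar>y - (a - frac (real j * \<alpha>) + of_int m)\<bar> < r"
proof -
  obtain l :: int where l: "l \<in> {0..1}" "frac (y + real j * \<alpha>) = y + frac (real j * \<alpha>) - of_int l"
    using frac_add_circle[OF assms(2)] .
  obtain k :: int where k: "k \<in> {-1..1}" "\<bar>a - frac (y + real j * \<alpha>) - of_int k\<bar> < r"
    using circle_dist_lt_imp_near_integer[OF assms(1) _ assms(3)[unfolded rotation_iterate[OF assms(2)]]]
    by (auto simp: circle_def frac_lt_1)
  show thesis
  proof (rule that[of "l - k"])
    show "l - k \<in> {-2..2}" using k(1) l(1) by auto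
    show "\<bar>y - (a - frac (real j * \<alpha>) + of_int (l - k))\<bar> < r"
      using k(2) unfolding l(2) by (simp add: abs_minus_commute algebra_simps)
  qed
qed

lemma emeasure_rotation_slice_le:
  assumes "a \<in> circle" "r \<ge> 0"
  shows "emeasure circle_measure {y \<in> circle. circle_dist a ((rotation \<alpha> ^^ j) y) < r}
    \<le> ennreal (10 * r)"
proof -
  define c where "c m = a - frac (real j * \<alpha>) + of_int m" for m :: int
  let ?U = "\<Union>m\<in>{-2..2}. {c m - r<..<c m + r}"
  have "{y \<in> circle. circle_dist a ((rotation \<alpha> ^^ j) y) < r} \<subseteq> circle \<inter> ?U"
  proof safe
    fix y assume "y \<in> circle" "circle_dist a ((rotation \<alpha> ^^ j) y) < r"
    then obtain m :: int where "m \<in> {-2..2}" "\<bar>y - c m\<bar> < r"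
      using rotation_iterate_near_imp[OF assms(1)] unfolding c_def by blast
    then show "y \<in> ?U" by (auto simp: abs_less_iff intro!: bexI[of _ m])
  qed
  then have "emeasure circle_measure {y \<in> circle. circle_dist a ((rotation \<alpha> ^^ j) y) < r}
      \<le> emeasure circle_measure (circle \<inter> ?U)"
    by (rule emeasure_mono) (auto intro: sets_circle_measure_Int_borel)
  also have "\<dots> = emeasure lborel (circle \<inter> ?U)"
    by (rule emeasure_circle_measure) auto
  also have "\<dots> \<le> emeasure lborel ?U"
    by (rule emeasure_mono) auto
  also have "\<dots> \<le> (\<Sum>m\<in>{-2..2}. emeasure lborel {c m - r<..<c m + r})"
    by (rule emeasure_subadditive_finite) auto
  also have "\<dots> = (\<Sum>m\<in>{-2..2::int}. ennreal (2 * r))"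
    using assms(2) by simp
  also have "\<dots> = ennreal (10 * r)"
    using assms(2) by (simp add: ennreal_mult flip: ennreal_of_nat_eq_real_of_nat)
  finally show ?thesis .
qed

definition close_pairs :: "(real \<Rightarrow> real) \<Rightarrow> (real \<Rightarrow> real) \<Rightarrow> real \<Rightarrow> (real \<times> real) set" where
  "close_pairs f g r = {(x, y). x \<in> circle \<and> y \<in> circle \<and> circle_dist (f x) (g y) < r}"

lemma E_set_eq_Union_close_pairs:
  "E_set T1 T2 n r = (\<Union>i<n. \<Union>j<n. close_pairs (T1 ^^ i) (T2 ^^ j) r)"
  by (auto simp: E_set_def close_pairs_def)

lemma sets_close_pairs:
  assumes "f \<in> circle_measure \<rightarrow>\<^sub>M circle_measure" "g \<in> circle_measure \<rightarrow>\<^sub>M circle_measure"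
  shows "close_pairs f g r \<in> sets (circle_measure \<Otimes>\<^sub>M circle_measure)"
proof -
  have [measurable]: "f \<in> borel_measurable circle_measure" "g \<in> borel_measurable circle_measure"
    using assms by (auto intro: measurable_compose borel_measurable_circle_measure_id)
  have "close_pairs f g r = {p \<in> space (circle_measure \<Otimes>\<^sub>M circle_measure).
      circle_dist (f (fst p)) (g (snd p)) < r}"
    by (auto simp: close_pairs_def space_pair_measure)
  also have "\<dots> \<in> sets (circle_measure \<Otimes>\<^sub>M circle_measure)"
    by measurable
  finally show ?thesis .
qed

lemma sets_E_set:
  assumes "T1 \<in> circle_measure \<rightarrow>\<^sub>M circle_measure" "T2 \<in> circle_measure \<rightarrow>\<^sub>M circle_measure"
  shows "E_set T1 T2 n r \<in> sets (circle_measure \<Otimes>\<^sub>M circle_measure)"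
  unfolding E_set_eq_Union_close_pairs
  using assms by (auto intro!: sets_close_pairs measurable_compose_n)

lemma emeasure_close_pairs_rotation_le:
  assumes f: "f \<in> circle_measure \<rightarrow>\<^sub>M circle_measure" and "r \<ge> 0"
  shows "emeasure (circle_measure \<Otimes>\<^sub>M circle_measure) (close_pairs f (rotation \<alpha> ^^ j) r)
    \<le> ennreal (10 * r)"
proof -
  interpret finite_measure circle_measure
    by (rule finite_measure_circle_measure)
  have "emeasure (circle_measure \<Otimes>\<^sub>M circle_measure) (close_pairs f (rotation \<alpha> ^^ j) r)
      = (\<integral>\<^sup>+x. emeasure circle_measure (Pair x -` close_pairs f (rotation \<alpha> ^^ j) r) \<partial>circle_measure)"
    by (intro emeasure_pair_measure_alt sets_close_pairs f measurable_compose_n measurable_rotation)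
  also have "\<dots> \<le> (\<integral>\<^sup>+x. ennreal (10 * r) \<partial>circle_measure)"
  proof (rule nn_integral_mono)
    fix x assume "x \<in> space circle_measure"
    then have "Pair x -` close_pairs f (rotation \<alpha> ^^ j) r
        = {y \<in> circle. circle_dist (f x) ((rotation \<alpha> ^^ j) y) < r}"
      by (auto simp: close_pairs_def)
    moreover have "f x \<in> circle"
      using measurable_space[OF f \<open>x \<in> space circle_measure\<close>] by simp
    ultimately show "emeasure circle_measure (Pair x -` close_pairs f (rotation \<alpha> ^^ j) r)
        \<le> ennreal (10 * r)"
      using emeasure_rotation_slice_le[OF _ \<open>r \<ge> 0\<close>] by simp
  qed
  also have "\<dots> = ennreal (10 * r)"
    by (simp add: emeasure_circle_measure circle_def)
  finally show ?thesis .
qed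

lemma emeasure_E_set_rotation_le:
  assumes T1: "T1 \<in> circle_measure \<rightarrow>\<^sub>M circle_measure" and "r \<ge> 0"
  shows "emeasure (circle_measure \<Otimes>\<^sub>M circle_measure) (E_set T1 (rotation \<alpha>) n r)
    \<le> ennreal (10 * real n ^ 2 * r)"
proof -
  let ?M = "circle_measure \<Otimes>\<^sub>M circle_measure"
  let ?I = "{..<n} \<times> {..<n}"
  let ?A = "\<lambda>t. close_pairs (T1 ^^ fst t) (rotation \<alpha> ^^ snd t) r"
  have A_sets: "?A t \<in> sets ?M" for t
    using T1 by (intro sets_close_pairs measurable_compose_n measurable_rotation)
  have E_eq: "E_set T1 (rotation \<alpha>) n r = (\<Union>t\<in>?I. ?A t)"
    unfolding E_set_eq_Union_close_pairs by auto blast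
  have "emeasure ?M (E_set T1 (rotation \<alpha>) n r) \<le> (\<Sum>t\<in>?I. emeasure ?M (?A t))"
    unfolding E_eq using A_sets by (intro emeasure_subadditive_finite) auto
  also have "\<dots> \<le> (\<Sum>t\<in>?I. ennreal (10 * r))"
    using T1 \<open>r \<ge> 0\<close>
    by (intro sum_mono emeasure_close_pairs_rotation_le measurable_compose_n)
  also have "\<dots> = ennreal (10 * real n ^ 2 * r)"
    using \<open>r \<ge> 0\<close>
    by (simp add: card_cartesian_product power2_eq_square ennreal_mult mult_ac
        flip: ennreal_of_nat_eq_real_of_nat)
  finally show ?thesis .
qed

lemma emeasure_liminf_eq_0:
  assumes [measurable]: "\<And>n. A n \<in> sets M" and lim: "(\<lambda>n. emeasure M (A n)) \<longlonglongrightarrow> 0"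
  shows "emeasure M (liminf A) = 0"
proof -
  have "(\<Inter>m\<in>{k..}. A m) \<in> null_sets M" for k
  proof -
    have "emeasure M (\<Inter>m\<in>{k..}. A m) \<le> 0"
    proof (rule LIMSEQ_le_const[OF lim])
      show "\<exists>N. \<forall>n\<ge>N. emeasure M (\<Inter>m\<in>{k..}. A m) \<le> emeasure M (A n)"
        by (intro exI[of _ k] allI impI emeasure_mono) auto
    qed
    moreover have "(\<Inter>m\<in>{k..}. A m) \<in> sets M"
      by (intro sets.countable_INT') auto
    ultimately show ?thesis by auto
  qed
  then have "liminf A \<in> null_sets M"
    by (auto simp: liminf_SUP_INF)
  then show ?thesis by auto
qed

lemma limsup_null_sets_if_summable_bound:
  assumes [measurable]: "\<And>n. A n \<in> sets M"
    and bound: "\<And>n. emeasure M (A n) \<le> ennreal (b n)"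
    and nonneg: "\<And>n. b n \<ge> 0" and "summable b"
  shows "limsup A \<in> null_sets M"
proof (rule borel_cantelli_limsup1)
  show finite: "emeasure M (A n) < \<infinity>" for n
    using bound[of n] by (simp add: le_less_trans)
  have "measure M (A n) \<le> b n" for n
    using bound[of n] finite[of n] nonneg[of n] by (simp add: emeasure_eq_ennreal_measure)
  then show "summable (\<lambda>n. measure M (A n))"
    by (intro summable_comparison_test'[OF \<open>summable b\<close>]) auto
qed auto

lemma E_set_mono:
  assumes "n \<le> n'" "r \<le> r'"
  shows "E_set T1 T2 n r \<subseteq> E_set T1 T2 n' r'"
proof
  fix p assume "p \<in> E_set T1 T2 n r"
  then obtain x y i j where xy: "p = (x, y)" "x \<in> circle" "y \<in> circle"
    and "i < n" "j < n" "circle_dist ((T1 ^^ i) x) ((T2 ^^ j) y) < r"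
    unfolding E_set_def by blast
  with assms have "i < n'" "j < n'" "circle_dist ((T1 ^^ i) x) ((T2 ^^ j) y) < r'"
    by linarith+
  with xy show "p \<in> E_set T1 T2 n' r'"
    unfolding E_set_def by blast
qed

lemma limsup_E_set_subset_dyadic:
  assumes dec: "\<forall>n\<ge>1. r (Suc n) \<le> r n"
  shows "limsup (\<lambda>n. E_set T1 T2 n (r n)) \<subseteq> limsup (\<lambda>k. E_set T1 T2 (2 ^ Suc k) (r (2 ^ k)))"
proof
  have r_decseq: "decseq (\<lambda>n. r (Suc n))"
    using dec by (intro decseq_SucI) simp
  fix p assume p: "p \<in> limsup (\<lambda>n. E_set T1 T2 n (r n))"
  have "\<exists>k\<ge>K. p \<in> E_set T1 T2 (2 ^ Suc k) (r (2 ^ k))" for K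
  proof -
    obtain m where m: "2 ^ K \<le> m" "p \<in> E_set T1 T2 m (r m)"
      using p by (auto simp: limsup_INF_SUP)
    have "(1::nat) \<le> 2 ^ K" by simp
    then have "1 \<le> m" using m(1) by linarith
    then obtain k where k: "2 ^ k \<le> m" "m < 2 ^ Suc k"
      using ex_power_ivl1[of 2 m] by auto
    have "(2::nat) ^ K < 2 ^ Suc k"
      using m(1) k(2) by linarith
    then have "K < Suc k"
      by (rule power_less_imp_less_exp[rotated]) simp
    then have "K \<le> k" by simp
    have "r (Suc (2 ^ k - 1 + (m - 2 ^ k))) \<le> r (Suc (2 ^ k - 1))"
      by (rule decseqD[OF r_decseq]) simp
    then have "r m \<le> r (2 ^ k)"
      using k(1) \<open>1 \<le> m\<close> by simp
    then have "E_set T1 T2 m (r m) \<subseteq> E_set T1 T2 (2 ^ Suc k) (r (2 ^ k))"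
      using k(2) by (intro E_set_mono) auto
    then show ?thesis
      using m(2) \<open>K \<le> k\<close> by auto
  qed
  then show "p \<in> limsup (\<lambda>k. E_set T1 T2 (2 ^ Suc k) (r (2 ^ k)))"
    by (auto simp: limsup_INF_SUP)
qed

lemma emeasure_liminf_E_set_rotation:
  assumes T1: "T1 \<in> circle_measure \<rightarrow>\<^sub>M circle_measure"
    and r_pos: "\<And>n. n \<ge> 1 \<Longrightarrow> r n > 0" and lim: "(\<lambda>n. real n ^ 2 * r n) \<longlonglongrightarrow> 0"
  shows "emeasure (circle_measure \<Otimes>\<^sub>M circle_measure)
    (liminf (\<lambda>n. E_set T1 (rotation \<alpha>) n (r n))) = 0"
proof (rule emeasure_liminf_eq_0)
  let ?M = "circle_measure \<Otimes>\<^sub>M circle_measure"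
  show "E_set T1 (rotation \<alpha>) n (r n) \<in> sets ?M" for n
    using T1 measurable_rotation by (rule sets_E_set)
  have bound: "emeasure ?M (E_set T1 (rotation \<alpha>) n (r n)) \<le> ennreal (10 * (real n ^ 2 * r n))"
    if "n \<ge> 1" for n
    using emeasure_E_set_rotation_le[OF T1, of "r n" \<alpha> n] r_pos[OF that]
    by (simp add: mult.assoc)
  show "(\<lambda>n. emeasure ?M (E_set T1 (rotation \<alpha>) n (r n))) \<longlonglongrightarrow> 0"
  proof (rule tendsto_sandwich[OF _ _ tendsto_const])
    show "\<forall>\<^sub>F n in sequentially. 0 \<le> emeasure ?M (E_set T1 (rotation \<alpha>) n (r n))"
      by simp
    show "\<forall>\<^sub>F n in sequentially.
        emeasure ?M (E_set T1 (rotation \<alpha>) n (r n)) \<le> ennreal (10 * (real n ^ 2 * r n))"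
      using bound by (rule eventually_sequentiallyI)
    show "(\<lambda>n. ennreal (10 * (real n ^ 2 * r n))) \<longlonglongrightarrow> 0"
      unfolding ennreal_0[symmetric] by (intro tendsto_ennrealI tendsto_mult_right_zero lim)
  qed
qed

lemma emeasure_limsup_E_set_rotation:
  assumes T1: "T1 \<in> circle_measure \<rightarrow>\<^sub>M circle_measure"
    and r_pos: "\<And>n. n \<ge> 1 \<Longrightarrow> r n > 0"
    and r_dec: "\<forall>n\<ge>1. r (Suc n) \<le> r n"
    and nr_dec: "\<forall>n\<ge>1. real (Suc n) * r (Suc n) \<le> real n * r n"
    and summable: "summable (\<lambda>n. real n * r n)"
  shows "emeasure (circle_measure \<Otimes>\<^sub>M circle_measure)
    (limsup (\<lambda>n. E_set T1 (rotation \<alpha>) n (r n))) = 0"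
proof -
  let ?M = "circle_measure \<Otimes>\<^sub>M circle_measure"
  let ?H = "\<lambda>k. E_set T1 (rotation \<alpha>) (2 ^ Suc k) (r (2 ^ k))"
  have sets_E: "E_set T1 (rotation \<alpha>) n s \<in> sets ?M" for n s
    using T1 measurable_rotation by (rule sets_E_set)
  have nr_nonneg: "real n * r n \<ge> 0" for n
    using r_pos[of n] by (cases "n = 0") auto
  have "summable (\<lambda>k. 2 ^ k * (real (2 ^ k) * r (2 ^ k)))"
    using condensation_test[of "\<lambda>n. real n * r n"] nr_dec nr_nonneg summable by simp
  then have "limsup ?H \<in> null_sets ?M"
  proof (intro limsup_null_sets_if_summable_bound)
    show "summable (\<lambda>k. 40 * (2 ^ k * (real (2 ^ k) * r (2 ^ k))))"
      using \<open>summable (\<lambda>k. 2 ^ k * (real (2 ^ k) * r (2 ^ k)))\<close> by (rule summable_mult)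
    show "emeasure ?M (?H k) \<le> ennreal (40 * (2 ^ k * (real (2 ^ k) * r (2 ^ k))))" for k
      using emeasure_E_set_rotation_le[OF T1, of "r (2 ^ k)" \<alpha> "2 ^ Suc k"] r_pos[of "2 ^ k"]
      by (simp add: power2_eq_square mult_ac)
    show "40 * (2 ^ k * (real (2 ^ k) * r (2 ^ k))) \<ge> 0" for k
      using nr_nonneg[of "2 ^ k"] by simp
  qed (rule sets_E)
  moreover have "limsup (\<lambda>n. E_set T1 (rotation \<alpha>) n (r n)) \<in> sets ?M"
    by (intro measurable_limsup sets_E)
  moreover have "limsup (\<lambda>n. E_set T1 (rotation \<alpha>) n (r n)) \<subseteq> limsup ?H"
    using r_dec by (rule limsup_E_set_subset_dyadic)
  ultimately have "limsup (\<lambda>n. E_set T1 (rotation \<alpha>) n (r n)) \<in> null_sets ?M"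
    by (rule null_sets_subset)
  then show ?thesis by (rule null_setsD1)
qed

theorem mainTheorem9:
  fixes T1 :: "real \<Rightarrow> real" and \<alpha> :: real and r :: "nat \<Rightarrow> real"
  assumes T1_maps: "\<And>x. x \<in> circle \<Longrightarrow> T1 x \<in> circle"
    and T1_meas: "T1 \<in> circle_measure \<rightarrow>\<^sub>M circle_measure"
    and T1_inv: "distr circle_measure circle_measure T1 = circle_measure"
    and T1_mix: "exp_mixing_BV_Linf circle_measure T1"
    and r_pos: "\<And>n. n \<ge> 1 \<Longrightarrow> r n > 0"
  shows "((\<lambda>n. real n ^ 2 * r n) \<longlonglongrightarrow> 0 \<longrightarrow>
            emeasure (circle_measure \<Otimes>\<^sub>M circle_measure)
              (liminf (\<lambda>n. E_set T1 (rotation \<alpha>) n (r n))) = 0)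
       \<and> ((\<forall>n\<ge>1. r (Suc n) \<le> r n) \<and> (\<forall>n\<ge>1. real (Suc n) * r (Suc n) \<le> real n * r n)
            \<and> summable (\<lambda>n. real n * r n) \<longrightarrow>
            emeasure (circle_measure \<Otimes>\<^sub>M circle_measure)
              (limsup (\<lambda>n. E_set T1 (rotation \<alpha>) n (r n))) = 0)"
proof (intro conjI impI)
  show "emeasure (circle_measure \<Otimes>\<^sub>M circle_measure)
      (liminf (\<lambda>n. E_set T1 (rotation \<alpha>) n (r n))) = 0"
    if "(\<lambda>n. real n ^ 2 * r n) \<longlonglongrightarrow> 0"
    using T1_meas r_pos that by (rule emeasure_liminf_E_set_rotation)
  show "emeasure (circle_measure \<Otimes>\<^sub>M circle_measure)
      (limsup (\<lambda>n. E_set T1 (rotation \<alpha>) n (r n))) = 0"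
    if "(\<forall>n\<ge>1. r (Suc n) \<le> r n) \<and> (\<forall>n\<ge>1. real (Suc n) * r (Suc n) \<le> real n * r n)
      \<and> summable (\<lambda>n. real n * r n)"
    using T1_meas r_pos that by (intro emeasure_limsup_E_set_rotation) auto
qed

end
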